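(* Let $p$ be an odd prime and let $s$ be an integer with $0\le s\le \frac{p-1}{2}$. Then, modulo $[p]^2$, $$\sum_{k=0}^{\frac{p-1}{2}} \begin{bmatrix}2k\\k\end{bmatrix}_{q^2}^2 \begin{bmatrix}2k\\k+s\end{bmatrix}_{q^2} \frac{q^{2k}}{(-q^2;q^2)_k^2\,(-q;q)_{2k}^2} \equiv \begin{cases} (-1)^s q^{\frac{p-1}{2}-s^2} \begin{bmatrix}\frac{p-1}{2}\\ \frac{p-2s-1}{4}\end{bmatrix}_{q^4}^2 \dfrac{(q^2;q^2)_{\frac{p-2s-1}{2}}\,(q^2;q^2)_{\frac{p+2s-1}{2}}}{(q^4;q^4)_{\frac{p-1}{2}}^2}, & \text{if } s\equiv \frac{p-1}{2}\pmod 2,\\[2mm] 0, & \text{otherwise.}\end{cases}$$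
   Context: For an indeterminate $q$ and an integer $n\ge 0$: $(a;q)_0=1$ and $(a;q)_n=(1-a)(1-aq)\cdots(1-aq^{n-1})$. The $q$-binomial coefficient is $\begin{bmatrix}n\\k\end{bmatrix}_q=\frac{(q^{n-k+1};q)_k}{(q;q)_k}$ if $0\le k\le n$ and $0$ otherwise; if no base is indicated, the base is $q$. For a positive integer $p$, $[p]=\frac{1-q^p}{1-q}=1+q+\cdots+q^{p-1}$. For a prime $p$, $[p]$ is irreducible in $\mathbb{Q}[q]$; for rational functions $A,B$ of $q$ whose denominators are coprime to $[p]$, $A\equiv B\pmod{[p]^r}$ means that $A-B$, written in lowest terms, has numerator divisible by $[p]^r$ in $\mathbb{Q}[q]$. *)

theory Defs
  imports "HOL-Computational_Algebra.Computational_Algebra"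
          "HOL-Computational_Algebra.Normalized_Fraction"
          "HOL-Computational_Algebra.Field_as_Ring"
begin

type_synonym ratfun = "rat poly fract"

definition qvar :: ratfun where
  "qvar = Fract [:0, 1:] 1"

definition qpoch :: "'a::field \<Rightarrow> 'a \<Rightarrow> nat \<Rightarrow> 'a" where
  "qpoch a x n = (\<Prod>i<n. (1 - a * x ^ i))"

definition qbinom :: "'a::field \<Rightarrow> nat \<Rightarrow> nat \<Rightarrow> 'a" where
  "qbinom x n k = (if k \<le> n then qpoch (x ^ (n - k + 1)) x k / qpoch x x k else 0)"

definition qint :: "nat \<Rightarrow> rat poly" where
  "qint p = (\<Sum>i<p. monom 1 i)"

definition qcong :: "ratfun \<Rightarrow> ratfun \<Rightarrow> rat poly \<Rightarrow> nat \<Rightarrow> bool" where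
  "qcong A B m r \<longleftrightarrow> m ^ r dvd fst (quot_of_fract (A - B))"

end

theory Submission
  imports Defs
begin

text \<open>
  Put \<open>Q = q\<^sup>2\<close> and \<open>p = 2n + 1\<close>. With \<open>x = q\<^bsup>2i+1\<^esup>\<close> one has
  \<open>(1 - x)\<^sup>2 - (1 - x q\<^sup>-\<^sup>p)(1 - x q\<^sup>p) = x q\<^sup>-\<^sup>p (1 - q\<^sup>p)\<^sup>2\<close>, so modulo \<open>[p]\<^sup>2\<close> the factor
  \<open>(q;Q)\<^sub>k\<^sup>2\<close> of each summand may be replaced by \<open>(Q\<^sup>-\<^sup>n;Q)\<^sub>k (Q\<^sup>n\<^sup>+\<^sup>1;Q)\<^sub>k\<close>.
  The resulting terminating sum can be evaluated exactly whenever \<open>q\<close> is not a root of unity: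
  by creative telescoping it satisfies a four-term recurrence in \<open>s\<close>, the closed form satisfies
  the same recurrence, and the two agree at \<open>s = n\<close>. All other denominators are products of
  factors \<open>1 - q\<^sup>j\<close> with \<open>p \<nmid> j\<close>, which are coprime to \<open>[p]\<close>.
\<close>

section \<open>q-Pochhammer symbols and q-binomial coefficients\<close>

definition not_root_of_unity :: "'a::field \<Rightarrow> bool" where
  "not_root_of_unity q \<longleftrightarrow> q \<noteq> 0 \<and> (\<forall>j>0. q ^ j \<noteq> 1)"

lemma not_root_of_unity_nonzero: "not_root_of_unity q \<Longrightarrow> q \<noteq> 0"
  by (simp add: not_root_of_unity_def)

lemma not_root_of_unity_one_minus_power: "not_root_of_unity q \<Longrightarrow> 0 < j \<Longrightarrow> 1 - q ^ j \<noteq> 0"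
  by (simp add: not_root_of_unity_def)

lemma not_root_of_unity_power: "not_root_of_unity q \<Longrightarrow> 0 < m \<Longrightarrow> not_root_of_unity (q ^ m)"
  unfolding not_root_of_unity_def by (auto simp: power_mult[symmetric])

lemma qpoch_0 [simp]: "qpoch a x 0 = 1"
  by (simp add: qpoch_def)

lemma qpoch_Suc: "qpoch a x (Suc n) = qpoch a x n * (1 - a * x ^ n)"
  by (simp add: qpoch_def)

lemma qpoch_self_Suc: "qpoch x x (Suc n) = qpoch x x n * (1 - x ^ Suc n)"
  by (simp add: qpoch_Suc)

lemma qpoch_self_add: "qpoch x x (m + n) = qpoch x x m * qpoch (x ^ (m + 1)) x n"
  by (induction n) (simp_all add: qpoch_Suc power_add algebra_simps)

lemma qpoch_self_double: "qpoch q q (2 * k) = qpoch q (q ^ 2) k * qpoch (q ^ 2) (q ^ 2) k"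
proof (induction k)
  case (Suc k)
  have "2 * Suc k = Suc (Suc (2 * k))"
    by simp
  then have "qpoch q q (2 * Suc k) = qpoch q q (2 * k) * (1 - q * q ^ (2 * k)) * (1 - q * q ^ Suc (2 * k))"
    by (simp add: qpoch_Suc)
  moreover have "q * q ^ (2 * k) = q * (q ^ 2) ^ k" "q * q ^ Suc (2 * k) = q ^ 2 * (q ^ 2) ^ k"
    by (simp_all add: power_mult power2_eq_square)
  moreover have "qpoch q (q ^ 2) (Suc k) = qpoch q (q ^ 2) k * (1 - q * (q ^ 2) ^ k)"
    "qpoch (q ^ 2) (q ^ 2) (Suc k) = qpoch (q ^ 2) (q ^ 2) k * (1 - q ^ 2 * (q ^ 2) ^ k)"
    by (simp_all add: qpoch_Suc)
  ultimately show ?case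
    by (simp only: Suc.IH) (simp add: ac_simps)
qed simp

lemma qpoch_mult_qpoch_uminus: "qpoch x y k * qpoch (- x) y k = qpoch (x ^ 2) (y ^ 2) k"
  unfolding qpoch_def prod.distrib[symmetric]
  by (rule prod.cong) (simp_all add: power2_eq_square power_mult_distrib algebra_simps power_mult[symmetric])

lemma qpoch_self_nonzero: "not_root_of_unity x \<Longrightarrow> qpoch x x n \<noteq> 0"
proof (induction n)
  case (Suc n)
  then show ?case
    using not_root_of_unity_one_minus_power[OF Suc.prems, of "Suc n"] by (simp add: qpoch_Suc)
qed simp

lemma qpoch_uminus_self_nonzero:
  assumes q: "not_root_of_unity q"
  shows "qpoch (- q) q k \<noteq> 0"
proof -
  have "1 - (- q) * q ^ i \<noteq> 0" for i
  proof
    assume "1 - (- q) * q ^ i = 0"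
    then have "q ^ Suc i = - 1"
      by (simp add: algebra_simps) (metis add.commute add_eq_0_iff)
    then have "q ^ (Suc i * 2) = 1"
      by (simp only: power_mult) simp
    then show False
      using not_root_of_unity_one_minus_power[OF q, of "Suc i * 2"] by simp
  qed
  then show ?thesis
    unfolding qpoch_def by (simp add: prod_zero_iff)
qed

lemma qbinom_eq_qpoch_self:
  assumes x: "not_root_of_unity x" and "m \<le> N"
  shows "qbinom x N m = qpoch x x N / (qpoch x x m * qpoch x x (N - m))"
proof -
  have "qpoch x x N = qpoch x x (N - m) * qpoch (x ^ (N - m + 1)) x m"
    using qpoch_self_add[of x "N - m" m] assms by simp
  then show ?thesis
    using assms qpoch_self_nonzero[OF x] by (simp add: qbinom_def field_simps)
qed

lemma qbinom_eq_0: "N < m \<Longrightarrow> qbinom x N m = 0"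
  by (simp add: qbinom_def)

lemma qbinom_0: "qbinom x N 0 = 1"
  by (simp add: qbinom_def)

lemma qbinom_diag: "not_root_of_unity x \<Longrightarrow> qbinom x N N = 1"
  using qpoch_self_nonzero[of x N] by (simp add: qbinom_def)

lemma qbinom_Suc_lower:
  assumes x: "not_root_of_unity x"
  shows "qbinom x N (Suc m) * (1 - x ^ Suc m) = qbinom x N m * (1 - x ^ (N - m))"
proof (cases "m < N")
  case True
  have split: "N - m = Suc (N - Suc m)"
    using True by simp
  have upper: "qbinom x N (Suc m) = qpoch x x N / (qpoch x x m * (1 - x ^ Suc m) * qpoch x x (N - Suc m))"
    using True by (simp add: qbinom_eq_qpoch_self[OF x] qpoch_self_Suc)
  have lower: "qbinom x N m = qpoch x x N / (qpoch x x m * (qpoch x x (N - Suc m) * (1 - x ^ (N - m))))"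
    using True by (simp add: qbinom_eq_qpoch_self[OF x] split qpoch_self_Suc del: power_Suc)
  have "1 - x ^ Suc m \<noteq> 0" "1 - x ^ (N - m) \<noteq> 0"
    by (rule not_root_of_unity_one_minus_power[OF x]; use True in simp)+
  then show ?thesis
    unfolding upper lower using qpoch_self_nonzero[OF x] by (simp add: field_simps)
next
  case False
  then show ?thesis
    by (cases "m = N") (simp_all add: qbinom_eq_0)
qed

lemma qbinom_central_Suc_lower:
  assumes x: "not_root_of_unity x"
  shows "qbinom x (2 * k) (k + s + 1) * (x ^ s * (1 - x ^ (k + s + 1)))
       = qbinom x (2 * k) (k + s) * (x ^ s - x ^ k)"
proof (cases "s \<le> k")
  case True
  have "2 * k - (k + s) = k - s"
    by arith
  then have "qbinom x (2 * k) (k + s + 1) * (1 - x ^ (k + s + 1)) = qbinom x (2 * k) (k + s) * (1 - x ^ (k - s))"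
    using qbinom_Suc_lower[OF x, of "2 * k" "k + s"] by simp
  moreover have "x ^ s - x ^ k = x ^ s * (1 - x ^ (k - s))"
    using True by (simp add: algebra_simps power_add[symmetric])
  ultimately show ?thesis
    by (metis mult.left_commute)
next
  case False
  then show ?thesis
    by (simp add: qbinom_eq_0)
qed

lemma qbinom_central_Suc:
  assumes x: "not_root_of_unity x" and sk: "s \<le> k"
  shows "qbinom x (2 * (k + 1)) (k + 1 + s) * ((1 - x ^ (k + s + 1)) * (x ^ s - x ^ (k + 1)))
       = qbinom x (2 * k) (k + s) * ((1 - x ^ (2 * k + 1)) * (1 - x ^ (2 * k + 2)) * x ^ s)"
proof -
  have nz: "\<And>n. qpoch x x n \<noteq> 0"
    using qpoch_self_nonzero[OF x] .
  have upper: "qbinom x (2 * (k + 1)) (k + 1 + s) = (qpoch x x (2 * k) * (1 - x ^ (2 * k + 1)) * (1 - x ^ (2 * k + 2)))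
       / ((qpoch x x (k + s) * (1 - x ^ (k + s + 1))) * (qpoch x x (k - s) * (1 - x ^ (k + 1 - s))))"
  proof -
    have "qpoch x x (2 * (k + 1)) = qpoch x x (2 * k) * (1 - x ^ (2 * k + 1)) * (1 - x ^ (2 * k + 2))"
      using qpoch_self_Suc[of x "2 * k + 1"] qpoch_self_Suc[of x "2 * k"] by simp
    moreover have "qpoch x x (k + 1 + s) = qpoch x x (k + s) * (1 - x ^ (k + s + 1))"
      using qpoch_self_Suc[of x "k + s"] by simp
    moreover have "qpoch x x (2 * (k + 1) - (k + 1 + s)) = qpoch x x (k - s) * (1 - x ^ (k + 1 - s))"
      using qpoch_self_Suc[of x "k - s"] sk by (simp add: Suc_diff_le)
    ultimately show ?thesis
      using sk by (simp add: qbinom_eq_qpoch_self[OF x])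
  qed
  have lower: "qbinom x (2 * k) (k + s) = qpoch x x (2 * k) / (qpoch x x (k + s) * qpoch x x (k - s))"
    using sk by (simp add: qbinom_eq_qpoch_self[OF x])
  have "x ^ s - x ^ (k + 1) = x ^ s * (1 - x ^ (k + 1 - s))"
    using sk by (simp add: algebra_simps power_add[symmetric])
  moreover have "1 - x ^ (k + s + 1) \<noteq> 0" "1 - x ^ (k + 1 - s) \<noteq> 0"
    by (rule not_root_of_unity_one_minus_power[OF x]; use sk in simp)+
  moreover have "\<And>N u1 u2 A B v w c :: 'a. A \<noteq> 0 \<Longrightarrow> B \<noteq> 0 \<Longrightarrow> v \<noteq> 0 \<Longrightarrow> w \<noteq> 0 \<Longrightarrow>
     N * u1 * u2 / ((A * v) * (B * w)) * (v * (c * w)) = N / (A * B) * (u1 * u2 * c)"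
    by (simp add: field_simps)
  ultimately show ?thesis
    unfolding upper lower using nz by simp
qed


section \<open>A terminating companion sum and its recurrence\<close>

definition trunc_weight :: "'a::field \<Rightarrow> nat \<Rightarrow> nat \<Rightarrow> 'a" where
  "trunc_weight Q n k = qpoch (inverse (Q ^ n)) Q k * qpoch (Q ^ (n + 1)) Q k * Q ^ k / (qpoch (Q ^ 2) (Q ^ 2) k) ^ 2"

definition trunc_term :: "'a::field \<Rightarrow> nat \<Rightarrow> nat \<Rightarrow> nat \<Rightarrow> 'a" where
  "trunc_term Q n s k = trunc_weight Q n k * qbinom Q (2 * k) (k + s)"

definition trunc_sum :: "'a::field \<Rightarrow> nat \<Rightarrow> nat \<Rightarrow> 'a" where
  "trunc_sum Q n s = (\<Sum>k = 0..n. trunc_term Q n s k)"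

text \<open>
  With \<open>a = Q\<^sup>n\<close> and \<open>c = Q\<^sup>s\<close>, \<open>recurrence\<close> is the four-term recurrence in \<open>s\<close> found by
  creative telescoping, and \<open>cert_factor\<close> evaluated at \<open>x = Q\<^sup>k\<close> is its rational certificate.
\<close>

definition recurrence :: "'a::field \<Rightarrow> 'a \<Rightarrow> 'a \<Rightarrow> 'a \<Rightarrow> 'a \<Rightarrow> 'a \<Rightarrow> 'a \<Rightarrow> 'a" where
  "recurrence Q a c f0 f1 f2 f3 =
     Q*(c-a)*(1-a*c*Q)*(1-Q^4*c^2)*f0
   + (1-Q^2*c^2)*(1-Q^2*c*a)*(a-Q*c)*f1
   - Q^2*c^2*(1-Q^4*c^2)*(1-a*c*Q^2)*(Q*c-a)*f2
   + Q^3*c^2*(1-Q^2*c^2)*(1-a*c*Q^3)*(Q^2*c-a)*f3"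

definition cert_factor :: "'a::field \<Rightarrow> 'a \<Rightarrow> 'a \<Rightarrow> 'a \<Rightarrow> 'a" where
  "cert_factor Q a c x =
     a*((1-Q^2*c^2)*(1-Q^3*c^2)*(1-Q^4*c^2))*(x-c)*(1-x^2) / (c*(1-c*Q*x)*(1-c*Q^2*x))"

definition trunc_cert :: "'a::field \<Rightarrow> nat \<Rightarrow> nat \<Rightarrow> nat \<Rightarrow> 'a" where
  "trunc_cert Q n s k = cert_factor Q (Q ^ n) (Q ^ s) (Q ^ k) * trunc_term Q n s k"

lemma recurrence_certificate_identity:
  fixes Q a c x :: "'a::field"
  defines "D1 \<equiv> 1-c*Q*x" and "D2 \<equiv> 1-c*Q^2*x" and "D3 \<equiv> 1-c*Q^3*x"
    and "E \<equiv> 1-Q^2*x^2" and "Fc \<equiv> c-Q*x" and "T \<equiv> (1-Q^2*c^2)*(1-Q^3*c^2)*(1-Q^4*c^2)"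
  shows "recurrence Q a c (c^3*Q^3*a*E*D1*D2*D3*Fc) (c^2*Q^3*a*E*D2*D3*Fc*(c-x))
           (c*Q^2*a*E*D3*Fc*(c*Q-x)*(c-x)) (a*E*Fc*(c*Q^2-x)*(c*Q-x)*(c-x))
       = c^3*Q^4*a*T*(Q*x-c)*E*(a-x)*(1-a*Q*x)*(1-Q*x^2) - c^2*Q^3*a*E*D3*Fc*(a*T*(x-c)*(1-x^2))"
  unfolding recurrence_def assms by algebra

lemma recurrence_certificate:
  fixes Q a c x F0 F1 F2 F3 F' G0 G1 :: "'a::field"
  assumes nz: "Q \<noteq> 0" "a \<noteq> 0" "c \<noteq> 0"
    "1 - c*Q*x \<noteq> 0" "1 - c*Q^2*x \<noteq> 0" "1 - c*Q^3*x \<noteq> 0" "1 - Q^2*x^2 \<noteq> 0" "c - Q*x \<noteq> 0"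
   and h1: "F1*(c*(1-c*Q*x)) = F0*(c-x)"
   and h2: "F2*(c*Q*(1-c*Q^2*x)) = F1*(c*Q-x)"
   and h3: "F3*(c*Q^2*(1-c*Q^3*x)) = F2*(c*Q^2-x)"
   and h4: "F'*(a*(1-Q^2*x^2)*(1-c*Q*x)*(c-Q*x)) = F0*(Q*(a-x)*(1-a*Q*x)*(1-Q*x^2)*c)"
   and h5: "G0*(c*(1-c*Q*x)*(1-c*Q^2*x)) = a*((1-Q^2*c^2)*(1-Q^3*c^2)*(1-Q^4*c^2))*(x-c)*(1-x^2)*F0"
   and h6: "G1*(c*(1-c*Q^2*x)*(1-c*Q^3*x)) = a*((1-Q^2*c^2)*(1-Q^3*c^2)*(1-Q^4*c^2))*(Q*x-c)*(1-Q^2*x^2)*F'"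
  shows "recurrence Q a c F0 F1 F2 F3 = G1 - G0"
proof -
  define D1 where "D1 = 1-c*Q*x"
  define D2 where "D2 = 1-c*Q^2*x"
  define D3 where "D3 = 1-c*Q^3*x"
  define E where "E = 1-Q^2*x^2"
  define Fc where "Fc = c-Q*x"
  define T where "T = (1-Q^2*c^2)*(1-Q^3*c^2)*(1-Q^4*c^2)"
  define M where "M = c^3*Q^3*a*E*D1*D2*D3*Fc"
  have "M \<noteq> 0"
    using nz unfolding M_def D1_def D2_def D3_def E_def Fc_def by simp
  note h1' = h1[folded D1_def] and h2' = h2[folded D2_def] and h3' = h3[folded D3_def]
  have m1: "M*F1 = (c^2*Q^3*a*E*D2*D3*Fc*(c-x))*F0"
  proof -
    have "M*F1 = (c^2*Q^3*a*E*D2*D3*Fc)*(F1*(c*D1))"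
      unfolding M_def by algebra
    then show ?thesis
      unfolding h1' by algebra
  qed
  have m2: "M*F2 = (c*Q^2*a*E*D3*Fc*(c*Q-x)*(c-x))*F0"
  proof -
    have "M*F2 = (c^2*Q^2*a*E*D1*D3*Fc)*(F2*(c*Q*D2))"
      unfolding M_def by algebra
    also have "\<dots> = (c*Q^2*a*E*D3*Fc*(c*Q-x))*(F1*(c*D1))"
      unfolding h2' by algebra
    finally show ?thesis
      unfolding h1' by algebra
  qed
  have m3: "M*F3 = (a*E*Fc*(c*Q^2-x)*(c*Q-x)*(c-x))*F0"
  proof -
    have "M*F3 = (c^2*Q*a*E*D1*D2*Fc)*(F3*(c*Q^2*D3))"
      unfolding M_def by algebra
    also have "\<dots> = (c*a*E*D1*Fc*(c*Q^2-x))*(F2*(c*Q*D2))"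
      unfolding h3' by algebra
    also have "\<dots> = (a*E*Fc*(c*Q^2-x)*(c*Q-x))*(F1*(c*D1))"
      unfolding h2' by algebra
    finally show ?thesis
      unfolding h1' by algebra
  qed
  have m5: "M*G0 = (c^2*Q^3*a*E*D3*Fc*(a*T*(x-c)*(1-x^2)))*F0"
  proof -
    have "M*G0 = (c^2*Q^3*a*E*D3*Fc)*(G0*(c*D1*D2))"
      unfolding M_def by algebra
    then show ?thesis
      unfolding h5[folded T_def D1_def D2_def] by algebra
  qed
  have m6: "M*G1 = (c^3*Q^4*a*T*(Q*x-c)*E*(a-x)*(1-a*Q*x)*(1-Q*x^2))*F0"
  proof -
    have "M*G1 = (c^2*Q^3*a*T*(Q*x-c)*E)*(F'*(a*E*D1*Fc))"
      unfolding M_def using h6[folded T_def D2_def D3_def E_def] by algebra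
    then show ?thesis
      unfolding h4[folded E_def D1_def Fc_def] by algebra
  qed
  have key: "recurrence Q a c M (c^2*Q^3*a*E*D2*D3*Fc*(c-x))
      (c*Q^2*a*E*D3*Fc*(c*Q-x)*(c-x)) (a*E*Fc*(c*Q^2-x)*(c*Q-x)*(c-x))
      = c^3*Q^4*a*T*(Q*x-c)*E*(a-x)*(1-a*Q*x)*(1-Q*x^2) - c^2*Q^3*a*E*D3*Fc*(a*T*(x-c)*(1-x^2))"
    unfolding M_def D1_def D2_def D3_def E_def Fc_def T_def by (rule recurrence_certificate_identity)
  have "M * recurrence Q a c F0 F1 F2 F3 = recurrence Q a c (M*F0) (M*F1) (M*F2) (M*F3)"
    unfolding recurrence_def by algebra
  also have "\<dots> = F0 * recurrence Q a c M (c^2*Q^3*a*E*D2*D3*Fc*(c-x))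
      (c*Q^2*a*E*D3*Fc*(c*Q-x)*(c-x)) (a*E*Fc*(c*Q^2-x)*(c*Q-x)*(c-x))"
    unfolding m1 m2 m3 recurrence_def by algebra
  also have "\<dots> = M*G1 - M*G0"
    unfolding key m5 m6 by algebra
  finally show ?thesis
    using \<open>M \<noteq> 0\<close> by (metis mult_left_cancel right_diff_distrib)
qed

lemma trunc_term_eq_0: "k < s \<Longrightarrow> trunc_term Q n s k = 0"
  by (simp add: trunc_term_def qbinom_eq_0)

lemma trunc_term_Suc_top: "Q \<noteq> 0 \<Longrightarrow> trunc_term Q n s (Suc n) = 0"
  by (simp add: trunc_term_def trunc_weight_def qpoch_Suc)

lemma trunc_sum_eq_0: "n < s \<Longrightarrow> trunc_sum Q n s = 0"
  by (simp add: trunc_sum_def trunc_term_eq_0)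

lemma trunc_weight_Suc:
  assumes Q: "not_root_of_unity Q"
  shows "trunc_weight Q n (k + 1) * (Q ^ n * (1 - Q ^ (2 * k + 2)) ^ 2)
       = trunc_weight Q n k * (Q * (Q ^ n - Q ^ k) * (1 - Q ^ (n + k + 1)))"
proof -
  have Q0: "Q \<noteq> 0"
    using not_root_of_unity_nonzero[OF Q] .
  have nz: "qpoch (Q ^ 2) (Q ^ 2) k \<noteq> 0"
    using qpoch_self_nonzero[OF not_root_of_unity_power[OF Q]] by simp
  have e1: "qpoch (Q ^ 2) (Q ^ 2) (k + 1) = qpoch (Q ^ 2) (Q ^ 2) k * (1 - Q ^ (2 * k + 2))"
    by (simp add: qpoch_Suc power_mult[symmetric] power_add[symmetric])
  have e2: "qpoch (inverse (Q ^ n)) Q (k + 1) = qpoch (inverse (Q ^ n)) Q k * ((Q ^ n - Q ^ k) / Q ^ n)"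
    using Q0 by (simp add: qpoch_Suc field_simps)
  have e3: "qpoch (Q ^ (n + 1)) Q (k + 1) = qpoch (Q ^ (n + 1)) Q k * (1 - Q ^ (n + k + 1))"
    by (simp add: qpoch_Suc power_add[symmetric])
  have ne: "1 - Q ^ (2 * k + 2) \<noteq> 0"
    by (rule not_root_of_unity_one_minus_power[OF Q]) simp
  have Qn: "Q ^ n \<noteq> 0"
    using Q0 by simp
  have cancel: "\<And>A B C D u v w :: 'a. D \<noteq> 0 \<Longrightarrow> u \<noteq> 0 \<Longrightarrow> w \<noteq> 0 \<Longrightarrow>
     (A * (v / w)) * (B * C) * (Q * Q ^ k) / (D * u) ^ 2 * (w * u ^ 2) = A * B * Q ^ k / D ^ 2 * (Q * v * C)"
    by (simp add: field_simps)
  show ?thesis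
    unfolding trunc_weight_def e1 e2 e3 using cancel[OF nz ne Qn] by simp
qed

lemma trunc_term_Suc_lower:
  assumes "not_root_of_unity Q"
  shows "trunc_term Q n (s + 1) k * (Q ^ s * (1 - Q ^ (k + s + 1))) = trunc_term Q n s k * (Q ^ s - Q ^ k)"
  using qbinom_central_Suc_lower[OF assms, of k s] unfolding trunc_term_def by (simp add: mult.assoc)

lemma trunc_term_Suc:
  assumes Q: "not_root_of_unity Q" and sk: "s \<le> k"
  shows "trunc_term Q n s (k + 1) * (Q ^ n * (1 - Q ^ (2 * k + 2)) * (1 - Q ^ (k + s + 1)) * (Q ^ s - Q ^ (k + 1)))
       = trunc_term Q n s k * (Q * (Q ^ n - Q ^ k) * (1 - Q ^ (n + k + 1)) * (1 - Q ^ (2 * k + 1)) * Q ^ s)"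
proof -
  have "trunc_term Q n s (k + 1) * (Q ^ n * (1 - Q ^ (2 * k + 2)) * (1 - Q ^ (k + s + 1)) * (Q ^ s - Q ^ (k + 1)))
          * (1 - Q ^ (2 * k + 2))
      = (trunc_weight Q n (k + 1) * (Q ^ n * (1 - Q ^ (2 * k + 2)) ^ 2))
          * (qbinom Q (2 * (k + 1)) (k + 1 + s) * ((1 - Q ^ (k + s + 1)) * (Q ^ s - Q ^ (k + 1))))"
    unfolding trunc_term_def by (simp add: power2_eq_square ac_simps)
  also have "\<dots> = (trunc_weight Q n k * (Q * (Q ^ n - Q ^ k) * (1 - Q ^ (n + k + 1))))
          * (qbinom Q (2 * k) (k + s) * ((1 - Q ^ (2 * k + 1)) * (1 - Q ^ (2 * k + 2)) * Q ^ s))"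
    unfolding trunc_weight_Suc[OF Q] qbinom_central_Suc[OF Q sk] ..
  also have "\<dots> = trunc_term Q n s k * (Q * (Q ^ n - Q ^ k) * (1 - Q ^ (n + k + 1)) * (1 - Q ^ (2 * k + 1)) * Q ^ s)
          * (1 - Q ^ (2 * k + 2))"
    unfolding trunc_term_def by (simp add: ac_simps)
  finally show ?thesis
    using not_root_of_unity_one_minus_power[OF Q, of "2 * k + 2"] by simp
qed

lemma recurrence_trunc_term:
  assumes Q: "not_root_of_unity Q"
  shows "recurrence Q (Q ^ n) (Q ^ s) (trunc_term Q n s k) (trunc_term Q n (s + 1) k)
           (trunc_term Q n (s + 2) k) (trunc_term Q n (s + 3) k)
       = trunc_cert Q n s (k + 1) - trunc_cert Q n s k"
proof (cases "s \<le> k")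
  case sk: True
  define a where "a = Q ^ n"
  define c where "c = Q ^ s"
  define x where "x = Q ^ k"
  have pw: "c*Q*x = Q^(k+s+1)" "c*Q^2*x = Q^(k+s+2)" "c*Q^3*x = Q^(k+s+3)" "Q^2*x^2 = Q^(2*k+2)"
       "a*Q*x = Q^(n+k+1)" "Q*x^2 = Q^(2*k+1)"
    unfolding a_def c_def x_def by (simp_all add: power_add power_mult power2_eq_square algebra_simps)
  have cQ: "c*Q = Q^(s+1)" "c*Q^2 = Q^(s+2)"
    unfolding c_def by (simp_all add: power_add power2_eq_square)
  have Qx: "Q*x = Q^(k+1)"
    unfolding x_def by simp
  have ne: "\<And>j. 0 < j \<Longrightarrow> 1 - Q^j \<noteq> 0"
    using not_root_of_unity_one_minus_power[OF Q] by blast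
  have nz: "Q \<noteq> 0" "a \<noteq> 0" "c \<noteq> 0"
    "1 - c*Q*x \<noteq> 0" "1 - c*Q^2*x \<noteq> 0" "1 - c*Q^3*x \<noteq> 0" "1 - Q^2*x^2 \<noteq> 0" "c - Q*x \<noteq> 0"
  proof -
    show "Q \<noteq> 0" "a \<noteq> 0" "c \<noteq> 0"
      using not_root_of_unity_nonzero[OF Q] unfolding a_def c_def by simp_all
    show "1 - c*Q*x \<noteq> 0" "1 - c*Q^2*x \<noteq> 0" "1 - c*Q^3*x \<noteq> 0" "1 - Q^2*x^2 \<noteq> 0"
      unfolding pw by (rule ne; simp)+
    have "c - Q*x = c * (1 - Q^(k+1-s))"
      unfolding c_def Qx using sk by (simp add: algebra_simps power_add[symmetric])
    then show "c - Q*x \<noteq> 0"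
      using \<open>c \<noteq> 0\<close> ne[of "k+1-s"] sk by simp
  qed
  have h1: "trunc_term Q n (s+1) k*(c*(1-c*Q*x)) = trunc_term Q n s k*(c-x)"
    unfolding pw unfolding c_def x_def by (rule trunc_term_Suc_lower[OF Q])
  have h2: "trunc_term Q n (s+2) k*(c*Q*(1-c*Q^2*x)) = trunc_term Q n (s+1) k*(c*Q-x)"
    unfolding pw unfolding cQ x_def using trunc_term_Suc_lower[OF Q, of n "s+1" k] by simp
  have h3: "trunc_term Q n (s+3) k*(c*Q^2*(1-c*Q^3*x)) = trunc_term Q n (s+2) k*(c*Q^2-x)"
    unfolding pw unfolding cQ x_def using trunc_term_Suc_lower[OF Q, of n "s+2" k] by (simp add: numeral_3_eq_3)
  have h4: "trunc_term Q n s (k+1)*(a*(1-Q^2*x^2)*(1-c*Q*x)*(c-Q*x))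
      = trunc_term Q n s k*(Q*(a-x)*(1-a*Q*x)*(1-Q*x^2)*c)"
    unfolding pw Qx unfolding a_def c_def x_def by (rule trunc_term_Suc[OF Q sk])
  have h5: "trunc_cert Q n s k*(c*(1-c*Q*x)*(1-c*Q^2*x))
      = a*((1-Q^2*c^2)*(1-Q^3*c^2)*(1-Q^4*c^2))*(x-c)*(1-x^2)*trunc_term Q n s k"
    unfolding trunc_cert_def cert_factor_def a_def[symmetric] c_def[symmetric] x_def[symmetric]
    using nz by simp
  have h6: "trunc_cert Q n s (k+1)*(c*(1-c*Q^2*x)*(1-c*Q^3*x))
      = a*((1-Q^2*c^2)*(1-Q^3*c^2)*(1-Q^4*c^2))*(Q*x-c)*(1-Q^2*x^2)*trunc_term Q n s (k+1)"
  proof -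
    have shifted: "1 - c*Q*(Q*x) = 1-c*Q^2*x" "1 - c*Q^2*(Q*x) = 1-c*Q^3*x" "1 - (Q*x)^2 = 1-Q^2*x^2"
      by (simp_all add: power2_eq_square power3_eq_cube algebra_simps)
    show ?thesis
      unfolding trunc_cert_def cert_factor_def a_def[symmetric] c_def[symmetric] Qx[symmetric] shifted
      using nz by simp
  qed
  show ?thesis
    using recurrence_certificate[OF nz h1 h2 h3 h4 h5 h6] unfolding a_def c_def .
next
  case False
  then have "trunc_term Q n s k = 0" "trunc_term Q n (s + 1) k = 0" "trunc_term Q n (s + 2) k = 0"
    "trunc_term Q n (s + 3) k = 0" "trunc_cert Q n s k = 0"
    by (simp_all add: trunc_term_eq_0 trunc_cert_def)
  moreover have "trunc_cert Q n s (k + 1) = 0"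
  proof (cases "k + 1 = s")
    case True
    then show ?thesis
      by (simp add: trunc_cert_def cert_factor_def)
  next
    case False
    then show ?thesis
      using \<open>\<not> s \<le> k\<close> by (simp add: trunc_cert_def trunc_term_eq_0)
  qed
  ultimately show ?thesis
    unfolding recurrence_def by simp
qed

lemma recurrence_trunc_sum:
  assumes Q: "not_root_of_unity Q"
  shows "recurrence Q (Q ^ n) (Q ^ s) (trunc_sum Q n s) (trunc_sum Q n (s + 1))
           (trunc_sum Q n (s + 2)) (trunc_sum Q n (s + 3)) = 0"
proof -
  have "recurrence Q (Q ^ n) (Q ^ s) (trunc_sum Q n s) (trunc_sum Q n (s + 1))
           (trunc_sum Q n (s + 2)) (trunc_sum Q n (s + 3))
      = (\<Sum>k = 0..n. recurrence Q (Q ^ n) (Q ^ s) (trunc_term Q n s k) (trunc_term Q n (s + 1) k)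
           (trunc_term Q n (s + 2) k) (trunc_term Q n (s + 3) k))"
    unfolding recurrence_def trunc_sum_def by (simp add: sum_distrib_left sum.distrib sum_subtractf)
  also have "\<dots> = (\<Sum>k = 0..n. trunc_cert Q n s (Suc k) - trunc_cert Q n s k)"
    using recurrence_trunc_term[OF Q] by simp
  also have "\<dots> = trunc_cert Q n s (Suc n) - trunc_cert Q n s 0"
    by (rule sum_Suc_diff) simp
  also have "\<dots> = 0"
    using not_root_of_unity_nonzero[OF Q] by (simp add: trunc_cert_def cert_factor_def trunc_term_Suc_top)
  finally show ?thesis .
qed

section \<open>Exact evaluation of the companion sum\<close>

definition closed_form :: "'a::field \<Rightarrow> nat \<Rightarrow> nat \<Rightarrow> 'a" where
  "closed_form q n s = (if s \<le> n \<and> s mod 2 = n mod 2 then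
       (- 1) ^ s * q powi (int n - int s ^ 2) * (qbinom (q ^ 4) n ((n - s) div 2)) ^ 2
       * qpoch (q ^ 2) (q ^ 2) (n - s) * qpoch (q ^ 2) (q ^ 2) (n + s) / (qpoch (q ^ 4) (q ^ 4) n) ^ 2
     else 0)"

lemma qbinom_half_step:
  assumes x: "not_root_of_unity x" and t: "t + 2 \<le> n" "t mod 2 = n mod 2"
  shows "qbinom (x^2) n ((n - t) div 2) * (1 - x^(n - t))
       = qbinom (x^2) n ((n - (t + 2)) div 2) * (1 - x^(n + t + 2))"
proof -
  define m where "m = (n - t) div 2"
  have m2: "2*m = n - t"
    using t unfolding m_def by presburger
  have "n - (t + 2) = 2*(m - 1)"
    using m2 t by arith
  then have m1: "Suc (m - 1) = m" "(n - (t + 2)) div 2 = m - 1"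
    using m2 t by arith+
  have "2*m = n - t" "2*(n - (m - 1)) = n + t + 2"
    using m2 t by arith+
  then have pw: "(x^2)^m = x^(n - t)" "(x^2)^(n - (m - 1)) = x^(n + t + 2)"
    by (simp_all only: power_mult[symmetric])
  have "not_root_of_unity (x^2)"
    using not_root_of_unity_power[OF x] by simp
  then have "qbinom (x^2) n m * (1 - (x^2)^m) = qbinom (x^2) n (m - 1) * (1 - (x^2)^(n - (m - 1)))"
    using qbinom_Suc_lower[of "x^2" n "m - 1"] unfolding m1(1) by blast
  then show ?thesis
    unfolding pw m1(2) m_def[symmetric] .
qed

lemma qpoch_self_Suc_Suc: "qpoch x x (Suc (Suc j)) = qpoch x x j * (1 - x^Suc j) * (1 - x^Suc (Suc j))"
  by (simp only: qpoch_self_Suc)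

lemma power_int_diff_square_Suc_Suc:
  fixes q :: "'a::field"
  assumes "q \<noteq> 0"
  shows "q powi (int n - int t ^ 2) = q powi (int n - int (t + 2) ^ 2) * q^(4*t + 4)"
proof -
  have "int n - int t ^ 2 = (int n - int (t + 2) ^ 2) + int (4*t + 4)"
    by (simp add: power2_eq_square algebra_simps)
  then show ?thesis
    by (simp only: power_int_add[OF disjI1[OF assms]] power_int_of_nat)
qed

lemma closed_form_Suc_Suc:
  assumes q: "not_root_of_unity q" and t: "t + 2 \<le> n" "t mod 2 = n mod 2"
  shows "(q^2)*((q^2)^t)^2*(1-(q^2)^n*(q^2)^t*(q^2)^2)*((q^2)*(q^2)^t-(q^2)^n) * closed_form q n (t+2)
       = ((q^2)^t-(q^2)^n)*(1-(q^2)^n*(q^2)^t*(q^2)) * closed_form q n t"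
proof -
  define Q where "Q = q^2"
  define b0 where "b0 = qbinom (q^4) n ((n - t) div 2)"
  define b1 where "b1 = qbinom (q^4) n ((n - (t + 2)) div 2)"
  have q2: "not_root_of_unity (q^2)"
    using not_root_of_unity_power[OF q] by simp
  have q4: "(q^2)^2 = q^4"
    by simp
  have B: "b0*(1-Q^(n-t)) = b1*(1-Q^(n+t+2))"
    using qbinom_half_step[OF q2 t, unfolded q4] unfolding b0_def b1_def Q_def .
  have "Suc (n-t-2) = n-t-1" "Suc (n-t-1) = n-t"
    using t by simp_all
  note P1 = qpoch_self_Suc_Suc[of Q "n-t-2", unfolded this]
  have P2: "qpoch Q Q (n+(t+2)) = qpoch Q Q (n+t) * (1-Q^(n+t+1)) * (1-Q^(n+t+2))"
    using qpoch_self_Suc_Suc[of Q "n+t"] by simp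
  have "q^(4*t + 4) = Q^2*(Q^t)^2"
    unfolding Q_def by (simp add: power_mult[symmetric] power_add[symmetric] algebra_simps)
  then have pw: "q powi (int n - int t ^ 2) = q powi (int n - int (t+2) ^ 2) * (Q^2*(Q^t)^2)"
    using power_int_diff_square_Suc_Suc[OF not_root_of_unity_nonzero[OF q]] by simp
  have R1: "closed_form q n t = (-1)^t*(q powi (int n - int (t+2) ^ 2)*(Q^2*(Q^t)^2))*b0^2
        *(qpoch Q Q (n-t-2)*(1-Q^(n-t-1))*(1-Q^(n-t)))*qpoch Q Q (n+t)/(qpoch (q^4) (q^4) n)^2"
    unfolding closed_form_def using t by (simp add: b0_def pw P1[unfolded Q_def] Q_def)
  have R2: "closed_form q n (t+2) = (-1)^t*q powi (int n - int (t+2) ^ 2)*b1^2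
        *qpoch Q Q (n-t-2)*(qpoch Q Q (n+t)*(1-Q^(n+t+1))*(1-Q^(n+t+2)))/(qpoch (q^4) (q^4) n)^2"
  proof -
    have "n - (t+2) = n-t-2" "(t+2) mod 2 = n mod 2"
      using t by presburger+
    then show ?thesis
      unfolding closed_form_def using t P2[unfolded Q_def] by (simp add: b1_def Q_def)
  qed
  have ab: "Q^t - Q^n = Q^t*(1-Q^(n-t))" "Q*Q^t - Q^n = Q*Q^t*(1-Q^(n-t-1))"
    "Q^n*Q^t*Q = Q^(n+t+1)" "Q^n*Q^t*Q^2 = Q^(n+t+2)"
    using t by (simp_all add: algebra_simps power_add[symmetric])
       (simp_all add: power_add[symmetric] power_Suc[symmetric])
  have cancel: "Q*C^2*(1-Y2)*(Q*C*(1-X1)) * (sg*u*b1^2*p1*(p2*(1-Y1)*(1-Y2))/D)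
      = C*(1-X2)*(1-Y1) * (sg*(u*(Q^2*C^2))*b0^2*(p1*(1-X1)*(1-X2))*p2/D)"
    if "b0*(1-X2) = b1*(1-Y2)" for C X1 X2 Y1 Y2 sg u p1 p2 D :: 'a
  proof -
    have "b1^2*(1-Y2)^2 = b0^2*(1-X2)^2"
      using that by (metis power_mult_distrib)
    then have "Q*C^2*(1-Y2)*(Q*C*(1-X1)) * (sg*u*b1^2*p1*(p2*(1-Y1)*(1-Y2)))
        = C*(1-X2)*(1-Y1) * (sg*(u*(Q^2*C^2))*b0^2*(p1*(1-X1)*(1-X2))*p2)"
      by algebra
    then show ?thesis
      by (metis times_divide_eq_right)
  qed
  show ?thesis
    unfolding Q_def[symmetric] ab R1 R2 by (rule cancel[OF B])
qed

lemma qpoch_inverse_power_reflection: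
  assumes q: "not_root_of_unity q"
  shows "qpoch (inverse ((q^2)^n)) (q^2) n * q^(n*(n+1)) = (-1)^n * qpoch (q^2) (q^2) n"
proof -
  define Q where "Q = q^2"
  have Q0: "Q \<noteq> 0"
    unfolding Q_def using not_root_of_unity_nonzero[OF q] by simp
  have reversed: "qpoch (inverse (Q^n)) Q n = (\<Prod>j<n. 1 - inverse (Q^Suc j))"
  proof -
    have "qpoch (inverse (Q^n)) Q n = (\<Prod>i\<in>{0..<n}. 1 - inverse (Q^n) * Q^i)"
      by (simp add: qpoch_def lessThan_atLeast0)
    also have "\<dots> = (\<Prod>i\<in>{0..<n}. 1 - inverse (Q^n) * Q^(n + 0 - Suc i))"
      by (rule prod.atLeastLessThan_rev)
    also have "\<dots> = (\<Prod>i\<in>{0..<n}. 1 - inverse (Q^Suc i))"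
    proof (rule prod.cong[OF refl])
      fix i
      assume "i \<in> {0..<n}"
      then have "Q^n = Q^Suc i * Q^(n - Suc i)"
        by (metis power_add atLeastLessThan_iff le_add_diff_inverse Suc_leI)
      then show "1 - inverse (Q^n) * Q^(n + 0 - Suc i) = 1 - inverse (Q^Suc i)"
        using Q0 by (simp add: field_simps)
    qed
    finally show ?thesis
      by (simp add: lessThan_atLeast0)
  qed
  have "(\<Prod>j<m. 1 - inverse (Q^Suc j)) * q^(m*(m+1)) = (-1)^m * qpoch Q Q m" for m
  proof (induction m)
    case (Suc m)
    have "Suc m * (Suc m + 1) = m*(m+1) + 2*Suc m"
      by (simp add: algebra_simps)
    then have "q^(Suc m * (Suc m + 1)) = q^(m*(m+1)) * Q^Suc m"
      unfolding Q_def power_mult[symmetric] by (simp only: power_add)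
    then have "(\<Prod>j<Suc m. 1 - inverse (Q^Suc j)) * q^(Suc m * (Suc m + 1))
        = ((\<Prod>j<m. 1 - inverse (Q^Suc j)) * q^(m*(m+1))) * ((1 - inverse (Q^Suc m)) * Q^Suc m)"
      by (simp add: ac_simps)
    also have "\<dots> = (-1)^m * qpoch Q Q m * (Q^Suc m - 1)"
      unfolding Suc.IH using Q0 by (simp add: field_simps)
    also have "\<dots> = (-1)^Suc m * qpoch Q Q (Suc m)"
      by (simp add: qpoch_Suc algebra_simps)
    finally show ?case .
  qed simp
  then show ?thesis
    unfolding Q_def[symmetric] reversed .
qed

lemma trunc_sum_diag:
  assumes q: "not_root_of_unity q"
  shows "trunc_sum (q^2) n n = closed_form q n n"
proof -
  define Q where "Q = q^2"
  have q0: "q \<noteq> 0"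
    using not_root_of_unity_nonzero[OF q] .
  have Q: "not_root_of_unity Q"
    unfolding Q_def using not_root_of_unity_power[OF q] by simp
  have "trunc_sum Q n n = (\<Sum>k<n. trunc_term Q n n k) + trunc_term Q n n n"
    unfolding trunc_sum_def by (simp add: atLeast0AtMost lessThan_Suc_atMost[symmetric])
  also have "(\<Sum>k<n. trunc_term Q n n k) = 0"
    by (rule sum.neutral) (simp add: trunc_term_eq_0)
  also have "trunc_term Q n n n = trunc_weight Q n n"
    using qbinom_diag[OF Q, of "2*n"] by (simp add: trunc_term_def mult_2)
  finally have sum: "trunc_sum Q n n = trunc_weight Q n n"
    by simp
  have reflection: "qpoch (inverse (Q^n)) Q n = (-1)^n * qpoch Q Q n / q^(n*(n+1))"
    using qpoch_inverse_power_reflection[OF q, of n] q0 unfolding Q_def[symmetric] by (simp add: field_simps)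
  have "int n - int n ^ 2 = int (2*n) - int (n*(n+1))"
    by (simp add: power2_eq_square algebra_simps)
  then have "q powi (int n - int n ^ 2) = q powi (int (2*n)) / q powi (int (n*(n+1)))"
    by (simp only:) (rule power_int_diff, use q0 in simp)
  also have "\<dots> = Q^n / q^(n*(n+1))"
    by (simp only: power_int_of_nat) (simp add: Q_def power_mult)
  finally have pw: "q powi (int n - int n ^ 2) = Q^n / q^(n*(n+1))" .
  have "qpoch Q Q (2*n) = qpoch Q Q n * qpoch (Q^(n+1)) Q n"
    using qpoch_self_add[of Q n n] by (simp add: mult_2)
  then have "trunc_weight Q n n = (-1)^n * q powi (int n - int n ^ 2) * qpoch Q Q (2*n) / (qpoch (q^4) (q^4) n)^2"
    unfolding trunc_weight_def reflection pw using qpoch_self_nonzero[OF Q] q0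
    by (simp add: field_simps Q_def flip: power_mult)
  moreover have "closed_form q n n = (-1)^n * q powi (int n - int n ^ 2) * qpoch Q Q (2*n) / (qpoch (q^4) (q^4) n)^2"
    unfolding closed_form_def by (simp add: qbinom_0 Q_def mult_2)
  ultimately show ?thesis
    using sum unfolding Q_def by simp
qed

lemma recurrence_closed_form:
  assumes q: "not_root_of_unity q" and sn: "s < n"
  shows "recurrence (q^2) ((q^2)^n) ((q^2)^s) (closed_form q n s) (closed_form q n (s+1))
           (closed_form q n (s+2)) (closed_form q n (s+3)) = 0"
proof -
  define Q where "Q = q^2"
  define a where "a = Q^n"
  define c where "c = Q^s"
  have "recurrence Q a c (closed_form q n s) (closed_form q n (s+1))
           (closed_form q n (s+2)) (closed_form q n (s+3)) = 0"
  proof (cases "s mod 2 = n mod 2")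
    case True
    then have s2: "s + 2 \<le> n"
      using sn by presburger
    have z: "closed_form q n (s+1) = 0" "closed_form q n (s+3) = 0"
      using True by (simp_all add: closed_form_def) presburger+
    have K: "Q*c^2*(1-a*c*Q^2)*(Q*c-a) * closed_form q n (s+2) = (c-a)*(1-a*c*Q) * closed_form q n s"
      using closed_form_Suc_Suc[OF q s2 True] unfolding Q_def[symmetric] a_def[symmetric] c_def[symmetric] .
    have "Q*(c-a)*(1-a*c*Q)*(1-Q^4*c^2) * closed_form q n s
        = Q*(1-Q^4*c^2) * (Q*c^2*(1-a*c*Q^2)*(Q*c-a) * closed_form q n (s+2))"
      unfolding K by algebra
    also have "\<dots> = Q^2*c^2*(1-Q^4*c^2)*(1-a*c*Q^2)*(Q*c-a) * closed_form q n (s+2)"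
      by algebra
    finally show ?thesis
      unfolding recurrence_def z by simp
  next
    case False
    then have z: "closed_form q n s = 0" "closed_form q n (s+2) = 0"
      by (simp_all add: closed_form_def)
    show ?thesis
    proof (cases "s + 1 = n")
      case True
      have "a - Q*c = 0"
        unfolding a_def c_def True[symmetric] by simp
      moreover have "closed_form q n (s+3) = 0"
        using True by (simp add: closed_form_def)
      ultimately show ?thesis
        unfolding recurrence_def z by simp
    next
      case False
      then have s3: "s + 1 + 2 \<le> n" "(s+1) mod 2 = n mod 2"
        using sn \<open>s mod 2 \<noteq> n mod 2\<close> by presburger+
      have K: "Q*(Q*c)^2*(1-a*(Q*c)*Q^2)*(Q*(Q*c)-a) * closed_form q n (s+3)
          = ((Q*c)-a)*(1-a*(Q*c)*Q) * closed_form q n (s+1)"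
        using closed_form_Suc_Suc[OF q s3] unfolding Q_def[symmetric] a_def[symmetric] c_def[symmetric] power_Suc
        by (simp add: numeral_3_eq_3 c_def)
      have "Q^3*c^2*(1-Q^2*c^2)*(1-a*c*Q^3)*(Q^2*c-a) * closed_form q n (s+3)
          = (1-Q^2*c^2) * (Q*(Q*c)^2*(1-a*(Q*c)*Q^2)*(Q*(Q*c)-a) * closed_form q n (s+3))"
        by algebra
      also have "\<dots> = - ((1-Q^2*c^2)*(1-Q^2*c*a)*(a-Q*c) * closed_form q n (s+1))"
        unfolding K by algebra
      finally show ?thesis
        unfolding recurrence_def z by simp
    qed
  qed
  then show ?thesis
    unfolding Q_def a_def c_def .
qed

lemma recurrence_eq_0_imp_eq:
  assumes "Q*(c-a)*(1-a*c*Q)*(1-Q^4*c^2) \<noteq> 0"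
    and "recurrence Q a c f0 f1 f2 f3 = 0" "recurrence Q a c g0 f1 f2 f3 = 0"
  shows "f0 = g0"
proof -
  have "Q*(c-a)*(1-a*c*Q)*(1-Q^4*c^2) * (f0 - g0)
      = recurrence Q a c f0 f1 f2 f3 - recurrence Q a c g0 f1 f2 f3"
    unfolding recurrence_def by algebra
  then show ?thesis
    using assms by simp
qed

lemma trunc_sum_eq_closed_form:
  assumes q: "not_root_of_unity q"
  shows "trunc_sum (q^2) n s = closed_form q n s"
proof (induction "n - s" arbitrary: s rule: less_induct)
  case less
  consider "n < s" | "s = n" | "s < n"
    by linarith
  then show ?case
  proof cases
    case 1
    then show ?thesis
      by (simp add: trunc_sum_eq_0 closed_form_def)
  next
    case 2
    then show ?thesis
      using trunc_sum_diag[OF q] by simp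
  next
    case sn: 3
    define Q where "Q = q^2"
    have Q: "not_root_of_unity Q"
      unfolding Q_def using not_root_of_unity_power[OF q] by simp
    have IH: "trunc_sum Q n (s + i) = closed_form q n (s + i)" if "0 < i" for i
      unfolding Q_def using less.hyps[of "s + i"] sn that by simp
    have nz: "Q*(Q^s-Q^n)*(1-Q^n*Q^s*Q)*(1-Q^4*(Q^s)^2) \<noteq> 0"
    proof -
      have e: "Q^s - Q^n = Q^s * (1 - Q^(n-s))" "Q^n*Q^s*Q = Q^(n+s+1)" "Q^4*(Q^s)^2 = Q^(2*s+4)"
        using sn by (simp_all add: algebra_simps power_add[symmetric] power_mult[symmetric])
      have "1 - Q^(n-s) \<noteq> 0" "1 - Q^(n+s+1) \<noteq> 0" "1 - Q^(2*s+4) \<noteq> 0"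
        by (rule not_root_of_unity_one_minus_power[OF Q]; use sn in simp)+
      then show ?thesis
        unfolding e using not_root_of_unity_nonzero[OF Q] by simp
    qed
    have "trunc_sum Q n (s+1) = closed_form q n (s+1)" "trunc_sum Q n (s+2) = closed_form q n (s+2)"
      "trunc_sum Q n (s+3) = closed_form q n (s+3)"
      by (rule IH; simp)+
    then have "recurrence Q (Q^n) (Q^s) (trunc_sum Q n s) (closed_form q n (s+1))
        (closed_form q n (s+2)) (closed_form q n (s+3)) = 0"
      using recurrence_trunc_sum[OF Q, of n s] by simp
    then show ?thesis
      using recurrence_eq_0_imp_eq[OF nz] recurrence_closed_form[OF q sn] unfolding Q_def by blast
  qed
qed

section \<open>Polynomials coprime to \<open>[p]\<close>\<close>

lemma qint_eq_sum_X_power: "qint p = (\<Sum>i<p. [:0, 1:] ^ i)"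
  by (simp add: qint_def monom_altdef)

lemma X_power_minus_1_eq_qint: "[:0, 1:] ^ p - 1 = ([:0, 1:] - 1) * qint p"
  unfolding qint_eq_sum_X_power by (rule power_diff_1_eq)

lemma dvd_power_minus_1: "(x - 1) dvd (x ^ k - (1::'a::comm_ring_1))"
  using power_diff_1_eq[of x k] by (metis dvd_triv_left)

lemma dvd_power_minus_1_gcd:
  fixes d :: "'a::comm_ring_1"
  shows "d dvd x^m - 1 \<Longrightarrow> d dvd x^n - 1 \<Longrightarrow> d dvd x^(gcd m n) - 1"
proof (induction m n rule: gcd_nat_induct)
  case (base m) then show ?case by simp
next
  case (step m n)
  have e: "x^m - 1 = x^(m mod n) * ((x^n)^(m div n) - 1) + (x^(m mod n) - 1)"
  proof -
    have "m = m mod n + n * (m div n)" by simp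
    then have "x^m = x^(m mod n) * (x^n)^(m div n)" by (metis power_add power_mult)
    then show ?thesis by (simp add: algebra_simps)
  qed
  have "d dvd (x^n)^(m div n) - 1" using step.prems(2) dvd_power_minus_1[of "x^n" "m div n"] dvd_trans by blast
  then have h: "d dvd x^(m mod n) * ((x^n)^(m div n) - 1)" by (rule dvd_mult)
  have "d dvd x^(m mod n) * ((x^n)^(m div n) - 1) + (x^(m mod n) - 1)" using step.prems(1) unfolding e .
  then have "d dvd x^(m mod n) - 1" using dvd_add_right_iff[OF h] by blast
  then have "d dvd x^(gcd n (m mod n)) - 1" using step.IH step.prems(2) by blast
  then show ?case by (simp add: gcd_red_nat[symmetric])
qed

lemma X_minus_1_dvd_qint_minus_of_nat: "([:0, 1:] - 1) dvd (qint p - of_nat p)"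
proof (induction p)
  case (Suc p)
  have "qint (Suc p) - of_nat (Suc p) = (qint p - of_nat p) + ([:0, 1:] ^ p - 1)"
    unfolding qint_eq_sum_X_power by (simp add: algebra_simps)
  then show ?case
    using Suc dvd_power_minus_1[of "[:0, 1:]" p] by (metis dvd_add)
qed (simp add: qint_def)

lemma coprime_one_minus_monom_qint:
  assumes p: "prime p" and "\<not> p dvd j"
  shows "coprime (1 - monom (1::rat) j) (qint p)"
proof (rule coprimeI)
  fix d
  assume d1: "d dvd 1 - monom 1 j" and d2: "d dvd qint p"
  have "d dvd [:0, 1:] ^ j - 1"
    using d1 dvd_minus_iff[of d "1 - monom 1 j"] by (simp add: monom_altdef)
  moreover have "d dvd [:0, 1:] ^ p - 1"
    using d2 unfolding X_power_minus_1_eq_qint by simp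
  moreover have "gcd j p = 1"
    using prime_imp_coprime[OF p \<open>\<not> p dvd j\<close>] by (simp add: coprime_iff_gcd_eq_1 gcd.commute)
  ultimately have "d dvd [:0, 1:] - 1"
    using dvd_power_minus_1_gcd by fastforce
  then have "d dvd qint p - (qint p - of_nat p)"
    using d2 X_minus_1_dvd_qint_minus_of_nat dvd_trans dvd_diff by blast
  moreover have "is_unit (of_nat p :: rat poly)"
    using prime_gt_0_nat[OF p] by (simp add: of_nat_poly is_unit_const_poly_iff dvd_field_iff)
  ultimately show "is_unit d"
    using dvd_unit_imp_unit by simp
qed

lemma coprime_monom_qint:
  assumes "0 < p"
  shows "coprime (monom (1::rat) j) (qint p)"
proof -
  have "coprime [:0, 1:] (qint p)"
  proof (rule coprimeI)
    fix d
    assume d1: "d dvd [:0, 1:]" and d2: "d dvd qint p"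
    have "d dvd [:0, 1:] ^ p - 1"
      using d2 unfolding X_power_minus_1_eq_qint by simp
    moreover have "d dvd [:0, 1:] ^ p"
      using d1 assms dvd_power[of p "[:0, 1:]"] dvd_trans by blast
    ultimately have "d dvd [:0, 1:] ^ p - ([:0, 1:] ^ p - 1)"
      by (rule dvd_diff[rotated])
    then show "is_unit d"
      by simp
  qed
  then show ?thesis
    by (simp add: monom_altdef)
qed

section \<open>Rational functions with denominator coprime to a polynomial\<close>

definition coprime_denom :: "rat poly \<Rightarrow> ratfun \<Rightarrow> bool" where
  "coprime_denom m f \<longleftrightarrow> (\<exists>a b. b \<noteq> 0 \<and> coprime b m \<and> f = Fract a b)"

definition in_power_ideal :: "rat poly \<Rightarrow> nat \<Rightarrow> ratfun \<Rightarrow> bool" where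
  "in_power_ideal m r f \<longleftrightarrow> (\<exists>h. coprime_denom m h \<and> f = Fract (m ^ r) 1 * h)"

lemma coprime_denom_Fract_1: "coprime_denom m (Fract a 1)"
  unfolding coprime_denom_def by (intro exI[of _ a] exI[of _ 1]) simp

lemma coprime_denom_0: "coprime_denom m 0"
  using coprime_denom_Fract_1[of m 0] by (simp add: Zero_fract_def)

lemma coprime_denom_1: "coprime_denom m 1"
  using coprime_denom_Fract_1[of m 1] by (simp add: One_fract_def)

lemma coprime_denom_mult: "coprime_denom m f \<Longrightarrow> coprime_denom m g \<Longrightarrow> coprime_denom m (f * g)"
proof -
  assume "coprime_denom m f" "coprime_denom m g"
  then obtain a b c d where "b \<noteq> 0" "coprime b m" "f = Fract a b" "d \<noteq> 0" "coprime d m" "g = Fract c d"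
    unfolding coprime_denom_def by blast
  then show ?thesis
    unfolding coprime_denom_def
    by (intro exI[of _ "a * c"] exI[of _ "b * d"]) (simp add: coprime_mult_left_iff)
qed

lemma coprime_denom_add: "coprime_denom m f \<Longrightarrow> coprime_denom m g \<Longrightarrow> coprime_denom m (f + g)"
proof -
  assume "coprime_denom m f" "coprime_denom m g"
  then obtain a b c d where "b \<noteq> 0" "coprime b m" "f = Fract a b" "d \<noteq> 0" "coprime d m" "g = Fract c d"
    unfolding coprime_denom_def by blast
  then show ?thesis
    unfolding coprime_denom_def
    by (intro exI[of _ "a * d + c * b"] exI[of _ "b * d"]) (simp add: coprime_mult_left_iff)
qed

lemma coprime_denom_uminus: "coprime_denom m f \<Longrightarrow> coprime_denom m (- f)"
proof -
  assume "coprime_denom m f"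
  then obtain a b where "b \<noteq> 0" "coprime b m" "f = Fract a b"
    unfolding coprime_denom_def by blast
  then show ?thesis
    unfolding coprime_denom_def by (intro exI[of _ "- a"] exI[of _ b]) simp
qed

lemma coprime_denom_diff: "coprime_denom m f \<Longrightarrow> coprime_denom m g \<Longrightarrow> coprime_denom m (f - g)"
  using coprime_denom_add[of m f "- g"] coprime_denom_uminus[of m g] by simp

lemma coprime_denom_inverse_Fract_1: "d \<noteq> 0 \<Longrightarrow> coprime d m \<Longrightarrow> coprime_denom m (inverse (Fract d 1))"
  unfolding coprime_denom_def by (intro exI[of _ 1] exI[of _ d]) simp

lemma coprime_denom_divide_Fract_1:
  "coprime_denom m f \<Longrightarrow> d \<noteq> 0 \<Longrightarrow> coprime d m \<Longrightarrow> coprime_denom m (f / Fract d 1)"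
  using coprime_denom_mult[OF _ coprime_denom_inverse_Fract_1] by (simp add: divide_inverse)

lemma coprime_denom_power: "coprime_denom m f \<Longrightarrow> coprime_denom m (f ^ k)"
  by (induction k) (simp_all add: coprime_denom_1 coprime_denom_mult)

lemma coprime_denom_prod: "(\<And>i. i \<in> A \<Longrightarrow> coprime_denom m (f i)) \<Longrightarrow> coprime_denom m (\<Prod>i\<in>A. f i)"
  by (induction A rule: infinite_finite_induct) (simp_all add: coprime_denom_1 coprime_denom_mult)

lemma in_power_ideal_0: "in_power_ideal m r 0"
  unfolding in_power_ideal_def using coprime_denom_0 by auto

lemma in_power_ideal_add: "in_power_ideal m r f \<Longrightarrow> in_power_ideal m r g \<Longrightarrow> in_power_ideal m r (f + g)"
  unfolding in_power_ideal_def by (auto simp: distrib_left intro: coprime_denom_add)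

lemma in_power_ideal_mult: "coprime_denom m g \<Longrightarrow> in_power_ideal m r f \<Longrightarrow> in_power_ideal m r (g * f)"
  unfolding in_power_ideal_def by (auto simp: ac_simps intro!: coprime_denom_mult)

lemma in_power_ideal_sum:
  "(\<And>i. i \<in> A \<Longrightarrow> in_power_ideal m r (f i)) \<Longrightarrow> in_power_ideal m r (\<Sum>i\<in>A. f i)"
  by (induction A rule: infinite_finite_induct) (simp_all add: in_power_ideal_0 in_power_ideal_add)

lemma in_power_ideal_prod_diff:
  fixes k :: nat
  assumes "\<And>i. i < k \<Longrightarrow> in_power_ideal m r (f i - g i)"
    and "\<And>i. i < k \<Longrightarrow> coprime_denom m (f i)" "\<And>i. i < k \<Longrightarrow> coprime_denom m (g i)"
  shows "in_power_ideal m r ((\<Prod>i<k. f i) - (\<Prod>i<k. g i))"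
  using assms
proof (induction k)
  case 0
  then show ?case
    by (simp add: in_power_ideal_0)
next
  case (Suc k)
  have "(\<Prod>i<Suc k. f i) - (\<Prod>i<Suc k. g i)
      = (\<Prod>i<k. f i) * (f k - g k) + g k * ((\<Prod>i<k. f i) - (\<Prod>i<k. g i))"
    by (simp add: algebra_simps)
  moreover have "coprime_denom m (\<Prod>i<k. f i)"
    using Suc.prems by (intro coprime_denom_prod) auto
  ultimately show ?case
    using Suc by (simp add: in_power_ideal_add in_power_ideal_mult)
qed

lemma qcong_if_in_power_ideal:
  assumes "in_power_ideal m r (A - B)"
  shows "qcong A B m r"
proof -
  obtain a b where b: "b \<noteq> 0" "coprime b m" and AB: "A - B = Fract (m ^ r * a) b"
    using assms unfolding in_power_ideal_def coprime_denom_def by auto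
  define u where "u = fst (quot_of_fract (A - B))"
  define v where "v = snd (quot_of_fract (A - B))"
  have "v \<noteq> 0"
    unfolding v_def by simp
  moreover have "Fract u v = Fract (m ^ r * a) b"
    unfolding u_def v_def AB[symmetric] by simp
  ultimately have "m ^ r dvd u * b"
    using eq_fract b by (metis dvd_triv_left mult.assoc)
  moreover have "coprime (m ^ r) b"
    using b(2) by (simp add: coprime_commute)
  ultimately show ?thesis
    unfolding qcong_def u_def using coprime_dvd_mult_left_iff by blast
qed

section \<open>Specialisation to the indeterminate \<open>q\<close>\<close>

lemma qvar_power: "qvar ^ j = Fract (monom 1 j) 1"
proof (induction j)
  case 0
  then show ?case
    by (simp add: One_fract_def)
next
  case (Suc j)
  then show ?case
    by (simp add: qvar_def mult_monom monom_Suc)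
qed

lemma not_root_of_unity_qvar: "not_root_of_unity qvar"
  unfolding not_root_of_unity_def
proof (intro conjI allI impI)
  show "qvar \<noteq> 0"
    unfolding qvar_def by (simp add: Zero_fract_def eq_fract)
  fix j :: nat
  assume "0 < j"
  then show "qvar ^ j \<noteq> 1"
    unfolding qvar_power by (simp add: One_fract_def eq_fract monom_eq_1_iff)
qed

lemma qpoch_qvar_power_eq_Fract:
  "qpoch (qvar ^ a) (qvar ^ b) k = Fract (\<Prod>i<k. 1 - monom 1 (a + b * i)) 1"
proof (induction k)
  case (Suc k)
  have "qvar ^ a * (qvar ^ b) ^ k = Fract (monom 1 (a + b * k)) 1"
    by (simp add: qvar_power[symmetric] power_add power_mult)
  then show ?case
    using Suc by (simp add: qpoch_Suc One_fract_def)
qed (simp add: One_fract_def)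

lemma coprime_denom_qvar_power: "coprime_denom m (qvar ^ j)"
  unfolding qvar_power by (rule coprime_denom_Fract_1)

lemma coprime_denom_qpoch_qvar_power: "coprime_denom m (qpoch (qvar ^ a) (qvar ^ b) k)"
  unfolding qpoch_qvar_power_eq_Fract by (rule coprime_denom_Fract_1)

lemma coprime_denom_inverse_qvar_power: "0 < p \<Longrightarrow> coprime_denom (qint p) (inverse (qvar ^ j))"
  unfolding qvar_power by (rule coprime_denom_inverse_Fract_1) (simp_all add: coprime_monom_qint)

lemma coprime_denom_divide_qpoch_qvar_power:
  assumes f: "coprime_denom (qint p) f" and p: "prime p"
    and ij: "\<And>i. i < k \<Longrightarrow> 0 < a + b * i \<and> \<not> p dvd (a + b * i)"
  shows "coprime_denom (qint p) (f / qpoch (qvar ^ a) (qvar ^ b) k)"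
  unfolding qpoch_qvar_power_eq_Fract
proof (rule coprime_denom_divide_Fract_1[OF f])
  have "monom (1::rat) (a + b * i) \<noteq> 1" if "i < k" for i
    using ij[OF that] by (simp add: monom_eq_1_iff)
  then show "(\<Prod>i<k. 1 - monom (1::rat) (a + b * i)) \<noteq> 0"
    by (simp add: prod_zero_iff)
  show "coprime (\<Prod>i<k. 1 - monom (1::rat) (a + b * i)) (qint p)"
    using ij coprime_one_minus_monom_qint[OF p] by (auto intro: prod_coprime_left)
qed

lemma prime_not_dvd_power_2_mult:
  fixes p :: nat
  assumes p: "prime p" "odd p" and j: "0 < j" "j < p"
  shows "\<not> p dvd 2 ^ e * j"
proof
  assume "p dvd 2 ^ e * j"
  then have "p dvd 2 \<or> p dvd j"
    using p(1) by (auto simp: prime_dvd_mult_iff dest: prime_dvd_power)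
  moreover have "\<not> p dvd 2"
    using p primes_dvd_imp_eq[OF p(1) two_is_prime_nat] by auto
  moreover have "\<not> p dvd j"
    using j by (auto dest: dvd_imp_le)
  ultimately show False
    by blast
qed

lemma central_summand_eq:
  assumes q: "not_root_of_unity q"
  shows "(qbinom (q^2) (2*k) k)^2 * qbinom (q^2) (2*k) (k+s) * q^(2*k)
          / ((qpoch (-(q^2)) (q^2) k)^2 * (qpoch (-q) q (2*k))^2)
       = (qpoch q (q^2) k)^2 * ((q^2)^k * qbinom (q^2) (2*k) (k+s) / (qpoch (q^4) (q^4) k)^2)"
proof -
  define Q where "Q = q^2"
  have Q: "not_root_of_unity Q"
    unfolding Q_def using not_root_of_unity_power[OF q] by simp
  have nz: "qpoch Q Q k \<noteq> 0" "qpoch (-q) q (2*k) \<noteq> 0" "qpoch (-Q) Q k \<noteq> 0"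
    using qpoch_self_nonzero[OF Q] qpoch_uminus_self_nonzero[OF q] qpoch_uminus_self_nonzero[OF Q] .
  have Q4: "qpoch (q^4) (q^4) k = qpoch Q Q k * qpoch (-Q) Q k"
    unfolding Q_def qpoch_mult_qpoch_uminus by simp
  have "qpoch Q Q k * qpoch (Q^(k+1)) Q k = qpoch q q (2*k) * qpoch (-q) q (2*k)"
    unfolding Q_def qpoch_mult_qpoch_uminus qpoch_self_add[symmetric] by (simp add: mult_2)
  also have "\<dots> = qpoch Q Q k * (qpoch q Q k * qpoch (-q) q (2*k))"
    unfolding Q_def qpoch_self_double by simp
  finally have central: "qbinom Q (2*k) k = qpoch q Q k * qpoch (-q) q (2*k) / qpoch Q Q k"
    using nz(1) by (simp add: qbinom_def field_simps)
  have "q^(2*k) = Q^k"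
    unfolding Q_def by (simp add: power_mult)
  then show ?thesis
    unfolding Q_def[symmetric] Q4 central using nz by (simp add: field_simps)
qed

lemma coprime_denom_trunc_coefficient:
  assumes p: "prime p" "p = 2 * n + 1" and kn: "k \<le> n" and sn: "s \<le> n"
  shows "coprime_denom (qint p)
           ((qvar ^ 2) ^ k * qbinom (qvar ^ 2) (2 * k) (k + s) / (qpoch (qvar ^ 4) (qvar ^ 4) k) ^ 2)"
proof -
  have ndvd: "0 < c + c * i \<and> \<not> p dvd (c + c * i)" if "c = 2 ^ e" "i < 2 * n" for c e i
  proof -
    have "c + c * i = 2 ^ e * (i + 1)"
      using that(1) by simp
    then show ?thesis
      using prime_not_dvd_power_2_mult[OF p(1), of "i + 1" e] that p(2) by simp
  qed
  have "coprime_denom (qint p) (qbinom (qvar ^ 2) (2 * k) (k + s))"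
  proof (cases "k + s \<le> 2 * k")
    case True
    have e: "(qvar ^ 2) ^ (2 * k - (k + s) + 1) = qvar ^ (2 * (2 * k - (k + s) + 1))"
      by (simp only: power_mult)
    have "qbinom (qvar ^ 2) (2 * k) (k + s)
        = qpoch (qvar ^ (2 * (2 * k - (k + s) + 1))) (qvar ^ 2) (k + s) / qpoch (qvar ^ 2) (qvar ^ 2) (k + s)"
      using True unfolding e[symmetric] by (simp add: qbinom_def)
    moreover have "coprime_denom (qint p) \<dots>"
      by (rule coprime_denom_divide_qpoch_qvar_power[OF coprime_denom_qpoch_qvar_power p(1)])
        (use ndvd[of 2 1] kn sn in simp)
    ultimately show ?thesis
      by simp
  next
    case False
    then show ?thesis
      by (simp add: qbinom_eq_0 coprime_denom_0)
  qed
  then have "coprime_denom (qint p)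
      ((qvar ^ 2) ^ k * qbinom (qvar ^ 2) (2 * k) (k + s) / qpoch (qvar ^ 4) (qvar ^ 4) k / qpoch (qvar ^ 4) (qvar ^ 4) k)"
    using ndvd[of 4 2] kn
    by (intro coprime_denom_divide_qpoch_qvar_power coprime_denom_mult p(1))
      (simp_all add: coprime_denom_qvar_power power_mult[symmetric])
  then show ?thesis
    by (simp add: power2_eq_square divide_divide_eq_left)
qed

lemma square_minus_trunc_factor_eq:
  assumes p: "p = 2*n+1"
  shows "(1 - qvar * (qvar^2)^i)^2 - (1 - inverse ((qvar^2)^n) * (qvar^2)^i) * (1 - (qvar^2)^(n+1) * (qvar^2)^i)
       = Fract (qint p ^ 2) 1 * (Fract (([:0, 1:] - 1)^2) 1 * qvar^(2*i+1) * inverse (qvar^p))"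
proof -
  define x where "x = qvar^(2*i+1)"
  define G where "G = qvar^p"
  have G0: "G \<noteq> 0" unfolding G_def using not_root_of_unity_nonzero[OF not_root_of_unity_qvar] by simp
  have e1: "qvar * (qvar^2)^i = x" unfolding x_def by (simp add: power_mult[symmetric])
  have e2: "inverse ((qvar^2)^n) * (qvar^2)^i = x * inverse G"
  proof -
    have "qvar^p = qvar * (qvar^2)^n" unfolding p by (simp add: power_mult[symmetric])
    then show ?thesis unfolding x_def G_def using not_root_of_unity_nonzero[OF not_root_of_unity_qvar]
      by (simp add: power_mult[symmetric] field_simps)
  qed
  have e3: "(qvar^2)^(n+1) * (qvar^2)^i = G * x"
    unfolding G_def x_def p by (simp add: power_mult[symmetric] power_add[symmetric] algebra_simps)
  have e4: "(G - 1)^2 = Fract (qint p ^ 2) 1 * Fract (([:0, 1:] - 1)^2) 1"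
  proof -
    have "G - 1 = Fract ([:0, 1:]^p - 1) 1" unfolding G_def qvar_power monom_altdef by (simp add: One_fract_def)
    then show ?thesis unfolding X_power_minus_1_eq_qint by (simp add: power2_eq_square ac_simps)
  qed
  have "(1 - x)^2 - (1 - x * inverse G) * (1 - G * x) = (G - 1)^2 * (x * inverse G)"
    using G0 by (simp add: field_simps power2_eq_square)
  then show ?thesis unfolding e1 e2 e3 e4 x_def[symmetric] G_def[symmetric] by (simp add: ac_simps)
qed

lemma in_power_ideal_trunc_factor:
  assumes pn: "p = 2 * n + 1"
  shows "in_power_ideal (qint p) 2 ((qpoch qvar (qvar ^ 2) k) ^ 2
           - qpoch (inverse ((qvar ^ 2) ^ n)) (qvar ^ 2) k * qpoch ((qvar ^ 2) ^ (n + 1)) (qvar ^ 2) k)"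
proof -
  define Q where "Q = qvar ^ 2"
  have p0: "0 < p"
    using pn by simp
  have gQ: "coprime_denom (qint p) (Q ^ j)" "coprime_denom (qint p) (inverse (Q ^ j))" for j
    unfolding Q_def power_mult[symmetric]
    by (rule coprime_denom_qvar_power coprime_denom_inverse_qvar_power[OF p0])+
  have "(qpoch qvar Q k) ^ 2 = (\<Prod>i<k. (1 - qvar * Q ^ i) ^ 2)"
    unfolding qpoch_def by (simp add: prod_power_distrib)
  moreover have "qpoch (inverse (Q ^ n)) Q k * qpoch (Q ^ (n + 1)) Q k
      = (\<Prod>i<k. (1 - inverse (Q ^ n) * Q ^ i) * (1 - Q ^ (n + 1) * Q ^ i))"
    unfolding qpoch_def by (simp add: prod.distrib)
  moreover have "in_power_ideal (qint p) 2 ((\<Prod>i<k. (1 - qvar * Q ^ i) ^ 2)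
      - (\<Prod>i<k. (1 - inverse (Q ^ n) * Q ^ i) * (1 - Q ^ (n + 1) * Q ^ i)))"
  proof (rule in_power_ideal_prod_diff)
    fix i
    show "in_power_ideal (qint p) 2 ((1 - qvar * Q ^ i) ^ 2 - (1 - inverse (Q ^ n) * Q ^ i) * (1 - Q ^ (n + 1) * Q ^ i))"
      unfolding Q_def square_minus_trunc_factor_eq[OF pn] in_power_ideal_def
      by (intro exI[of _ "Fract (([:0, 1:] - 1) ^ 2) 1 * qvar ^ (2 * i + 1) * inverse (qvar ^ p)"]
          conjI refl coprime_denom_mult coprime_denom_Fract_1 coprime_denom_qvar_power
          coprime_denom_inverse_qvar_power p0)
    show "coprime_denom (qint p) ((1 - qvar * Q ^ i) ^ 2)"
      using coprime_denom_qvar_power[of _ 1]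
      by (intro coprime_denom_power coprime_denom_diff coprime_denom_1 coprime_denom_mult gQ) simp
    show "coprime_denom (qint p) ((1 - inverse (Q ^ n) * Q ^ i) * (1 - Q ^ (n + 1) * Q ^ i))"
      by (intro coprime_denom_mult coprime_denom_diff coprime_denom_1 gQ)
  qed
  ultimately show ?thesis
    unfolding Q_def by simp
qed

lemma in_power_ideal_sum_minus_trunc_sum:
  assumes p: "prime p" "p = 2 * n + 1" and sn: "s \<le> n"
  shows "in_power_ideal (qint p) 2
    ((\<Sum>k = 0..n. (qbinom (qvar ^ 2) (2 * k) k) ^ 2 * qbinom (qvar ^ 2) (2 * k) (k + s) * qvar ^ (2 * k)
        / ((qpoch (- (qvar ^ 2)) (qvar ^ 2) k) ^ 2 * (qpoch (- qvar) qvar (2 * k)) ^ 2))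
     - trunc_sum (qvar ^ 2) n s)"
proof -
  define C where
    "C k = (qvar ^ 2) ^ k * qbinom (qvar ^ 2) (2 * k) (k + s) / (qpoch (qvar ^ 4) (qvar ^ 4) k) ^ 2" for k
  have "trunc_term (qvar ^ 2) n s k
      = qpoch (inverse ((qvar ^ 2) ^ n)) (qvar ^ 2) k * qpoch ((qvar ^ 2) ^ (n + 1)) (qvar ^ 2) k * C k" for k
    unfolding trunc_term_def trunc_weight_def C_def by (simp add: power_mult[symmetric] ac_simps)
  then have "(\<Sum>k = 0..n. (qbinom (qvar ^ 2) (2 * k) k) ^ 2 * qbinom (qvar ^ 2) (2 * k) (k + s) * qvar ^ (2 * k)
        / ((qpoch (- (qvar ^ 2)) (qvar ^ 2) k) ^ 2 * (qpoch (- qvar) qvar (2 * k)) ^ 2))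
      - trunc_sum (qvar ^ 2) n s
    = (\<Sum>k = 0..n. C k * ((qpoch qvar (qvar ^ 2) k) ^ 2
        - qpoch (inverse ((qvar ^ 2) ^ n)) (qvar ^ 2) k * qpoch ((qvar ^ 2) ^ (n + 1)) (qvar ^ 2) k))"
    unfolding trunc_sum_def central_summand_eq[OF not_root_of_unity_qvar] C_def sum_subtractf[symmetric]
    by (simp add: algebra_simps power_mult[symmetric])
  also have "in_power_ideal (qint p) 2 \<dots>"
    using coprime_denom_trunc_coefficient[OF p _ sn] in_power_ideal_trunc_factor[OF p(2)]
    unfolding C_def by (intro in_power_ideal_sum in_power_ideal_mult) auto
  finally show ?thesis .
qed

theorem theorem2p1:
  fixes p s :: nat
  assumes "prime p" and "odd p" and "s \<le> (p - 1) div 2"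
  shows "qcong
    (\<Sum>k = 0..(p - 1) div 2.
        (qbinom (qvar ^ 2) (2 * k) k) ^ 2 * qbinom (qvar ^ 2) (2 * k) (k + s)
        * qvar ^ (2 * k)
        / ((qpoch (- (qvar ^ 2)) (qvar ^ 2) k) ^ 2 * (qpoch (- qvar) qvar (2 * k)) ^ 2))
    (if s mod 2 = ((p - 1) div 2) mod 2 then
       (- 1) ^ s * qvar powi (int ((p - 1) div 2) - int s ^ 2)
       * (qbinom (qvar ^ 4) ((p - 1) div 2) ((p - 2 * s - 1) div 4)) ^ 2
       * qpoch (qvar ^ 2) (qvar ^ 2) ((p - 2 * s - 1) div 2)
       * qpoch (qvar ^ 2) (qvar ^ 2) ((p + 2 * s - 1) div 2)
       / (qpoch (qvar ^ 4) (qvar ^ 4) ((p - 1) div 2)) ^ 2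
     else 0)
    (qint p) 2"
proof -
  define n where "n = (p - 1) div 2"
  have pn: "p = 2 * n + 1"
    using assms(2) unfolding n_def by presburger
  have sn: "s \<le> n"
    using assms(3) unfolding n_def .
  have "(p - 2 * s - 1) div 4 = (n - s) div 2" "(p - 2 * s - 1) div 2 = n - s" "(p + 2 * s - 1) div 2 = n + s"
    using pn sn by simp_all
  then have "(if s mod 2 = ((p - 1) div 2) mod 2 then
       (- 1) ^ s * qvar powi (int ((p - 1) div 2) - int s ^ 2)
       * (qbinom (qvar ^ 4) ((p - 1) div 2) ((p - 2 * s - 1) div 4)) ^ 2
       * qpoch (qvar ^ 2) (qvar ^ 2) ((p - 2 * s - 1) div 2)
       * qpoch (qvar ^ 2) (qvar ^ 2) ((p + 2 * s - 1) div 2)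
       / (qpoch (qvar ^ 4) (qvar ^ 4) ((p - 1) div 2)) ^ 2
     else 0) = trunc_sum (qvar ^ 2) n s"
    unfolding trunc_sum_eq_closed_form[OF not_root_of_unity_qvar] closed_form_def n_def[symmetric]
    using sn by simp
  with in_power_ideal_sum_minus_trunc_sum[OF assms(1) pn sn] show ?thesis
    unfolding n_def[symmetric] by (simp add: qcong_if_in_power_ideal)
qed

end
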